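(* Let $n\ge1$, $q$ a prime power, and let $\mathcal{F}$ be a covering of $[n]$ with no redundant basic set. If the $\mathcal{F}$-combinatorial metric $d_{\mathcal{F}}$ on $\mathbb{F}_q^n$ admits a MacWilliams-type identity, then $\mathcal{F}$ is a $k$-partition of $[n]$ for some $k$.
   Context: For a covering $\mathcal{F}$ of $[n]$ (a family of subsets, called basic sets, whose union is $[n]$) and $x\in\mathbb{F}_q^n$ with $\mathrm{supp}(x)=\{i:x_i\neq0\}$, $\mathrm{wt}_{\mathcal{F}}(x)=\min\{|\mathcal{A}|:\mathcal{A}\subset\mathcal{F},\ \mathrm{supp}(x)\subset\bigcup_{A\in\mathcal{A}}A\}$ and $d_{\mathcal{F}}(x,y)=\mathrm{wt}_{\mathcal{F}}(x-y)$. A basic set $A$ is redundant if $A\subsetneq B$ for some $B\in\mathcal{F}$. $\mathcal{F}$ is a $k$-partition if it is a partition of $[n]$ all of whose blocks have cardinality $k$. For a linear code $\mathcal{C}\subset\mathbb{F}_q^n$, its dual is $\mathcal{C}^\perp=\{u: \sum_i u_ic_i=0\ \forall c\in\mathcal{C}\}$ and its $\mathcal{F}$-weight enumerator is $W_{\mathcal{C}}(x,y)=\sum_{c\in\mathcal{C}}x^{D-\mathrm{wt}_{\mathcal{F}}(c)}y^{\mathrm{wt}_{\mathcal{F}}(c)}$ with $D=\max_{c\in\mathcal{C}}\mathrm{wt}_{\mathcal{F}}(c)$. The metric $d_{\mathcal{F}}$ admits a MacWilliams-type identity if for all linear codes $\mathcal{C}_1,\mathcal{C}_2\subset\mathbb{F}_q^n$,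 $W_{\mathcal{C}_1}=W_{\mathcal{C}_2}$ implies $W_{\mathcal{C}_1^\perp}=W_{\mathcal{C}_2^\perp}$. *)

theory Defs
  imports Main
begin

definition vecs :: "nat \<Rightarrow> (nat \<Rightarrow> 'a::field) set" where
  "vecs n = {x. \<forall>i. i \<notin> {1..n} \<longrightarrow> x i = 0}"

definition supp :: "(nat \<Rightarrow> 'a::zero) \<Rightarrow> nat set" where
  "supp x = {i. x i \<noteq> 0}"

definition covering :: "nat \<Rightarrow> nat set set \<Rightarrow> bool" where
  "covering n F \<longleftrightarrow> \<Union>F = {1..n}"

definition redundant :: "nat set set \<Rightarrow> nat set \<Rightarrow> bool" where
  "redundant F A \<longleftrightarrow> (\<exists>B\<in>F. A \<subset> B)"

definition no_redundant :: "nat set set \<Rightarrow> bool" where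
  "no_redundant F \<longleftrightarrow> (\<forall>A\<in>F. \<not> redundant F A)"

definition wtF :: "nat set set \<Rightarrow> (nat \<Rightarrow> 'a::zero) \<Rightarrow> nat" where
  "wtF F x = Min {card \<A> | \<A>. \<A> \<subseteq> F \<and> supp x \<subseteq> \<Union>\<A>}"

definition dF :: "nat set set \<Rightarrow> (nat \<Rightarrow> 'a::ab_group_add) \<Rightarrow> (nat \<Rightarrow> 'a) \<Rightarrow> nat" where
  "dF F x y = wtF F (\<lambda>i. x i - y i)"

definition linear_code :: "nat \<Rightarrow> (nat \<Rightarrow> 'a::field) set \<Rightarrow> bool" where
  "linear_code n C \<longleftrightarrow> C \<subseteq> vecs n \<and> (\<lambda>_. 0) \<in> C
     \<and> (\<forall>x\<in>C. \<forall>y\<in>C. (\<lambda>i. x i + y i) \<in> C)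
     \<and> (\<forall>a. \<forall>x\<in>C. (\<lambda>i. a * x i) \<in> C)"

definition dual_code :: "nat \<Rightarrow> (nat \<Rightarrow> 'a::field) set \<Rightarrow> (nat \<Rightarrow> 'a) set" where
  "dual_code n C = {u \<in> vecs n. \<forall>c\<in>C. (\<Sum>i\<in>{1..n}. u i * c i) = 0}"

text \<open>The F-weight enumerator W_C(x,y) = sum over c of x^(D - wt c) y^(wt c),
  represented by its coefficient function: (i,j) maps to the coefficient of x^i y^j.\<close>
definition weight_enum :: "nat set set \<Rightarrow> (nat \<Rightarrow> 'a::field) set \<Rightarrow> nat \<times> nat \<Rightarrow> nat" where
  "weight_enum F C = (let D = Max (wtF F ` C) in
     (\<lambda>(i, j). card {c\<in>C. i = D - wtF F c \<and> j = wtF F c}))"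

definition admits_MacWilliams :: "'a::{finite,field} itself \<Rightarrow> nat \<Rightarrow> nat set set \<Rightarrow> bool" where
  "admits_MacWilliams TYPE('a) n F \<longleftrightarrow>
    (\<forall>(C1 :: (nat \<Rightarrow> 'a) set) (C2 :: (nat \<Rightarrow> 'a) set). linear_code n C1 \<longrightarrow> linear_code n C2 \<longrightarrow>
       weight_enum F C1 = weight_enum F C2 \<longrightarrow>
       weight_enum F (dual_code n C1) = weight_enum F (dual_code n C2))"

definition k_partition :: "nat \<Rightarrow> nat \<Rightarrow> nat set set \<Rightarrow> bool" where
  "k_partition k n F \<longleftrightarrow> \<Union>F = {1..n} \<and> (\<forall>A\<in>F. A \<noteq> {} \<and> card A = k)
     \<and> (\<forall>A\<in>F. \<forall>B\<in>F. A \<noteq> B \<longrightarrow> A \<inter> B = {})"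

end

theory Submission
  imports Defs "HOL-Library.FuncSet" "HOL-Library.Cardinality"
begin

text \<open>
  A vector has F-weight 1 iff its support is nonempty and lies in one block. For v of weight 1
  the weight enumerator of the line spanned by v depends only on the weight of v, so a
  MacWilliams identity forces the number of weight-1 vectors orthogonal to v to be the same
  for all such v. If two blocks A \<noteq> B met in a, pick i \<in> A - B: comparing v = e_i with
  v = e_i + e_a, the map u \<mapsto> u(i := 0) injects the weight-1 solutions of u_i + u_a = 0
  into those of u_i = 0 and misses the indicator of B, since no block strictly contains B.
  Once the blocks are disjoint, the weight-1 vectors with u_i \<noteq> 0 for i \<in> A are exactly the
  vectors supported on A with u_i \<noteq> 0, of which there are (q - 1) q^(|A| - 1);
  comparing e_i with e_j then gives |A| = |B|.
\<close>

lemma card_supp_subset: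
  assumes "finite S"
  shows "card {u :: nat \<Rightarrow> 'a::{finite,zero}. supp u \<subseteq> S} = CARD('a) ^ card S"
proof -
  have "bij_betw (\<lambda>u. restrict u S) {u :: nat \<Rightarrow> 'a. supp u \<subseteq> S} (S \<rightarrow>\<^sub>E UNIV)"
  proof (rule bij_betw_byWitness[where f' = "\<lambda>f k. if k \<in> S then f k else 0"])
  qed (auto simp: supp_def PiE_def extensional_def fun_eq_iff split: if_splits)
  then show ?thesis
    using card_PiE[OF assms, of "\<lambda>_. UNIV :: 'a set"] by (simp add: bij_betw_same_card)
qed

lemma finite_supp_subset:
  assumes "finite S"
  shows "finite {u :: nat \<Rightarrow> 'a::{finite,zero}. supp u \<subseteq> S}"
  using card_supp_subset[OF assms, where 'a='a] by (intro card_ge_0_finite) simp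

lemma vecs_eq: "vecs n = {u. supp u \<subseteq> {1..n}}"
  by (auto simp: vecs_def supp_def)

lemma finite_vecs: "finite (vecs n :: (nat \<Rightarrow> 'a::{finite,field}) set)"
  unfolding vecs_eq by (rule finite_supp_subset) simp

lemma card_field_ge_2: "CARD('a::{finite,field}) \<ge> 2"
proof -
  have "card {0, 1 :: 'a} = 2" by simp
  then show ?thesis by (metis card_mono finite subset_UNIV)
qed

lemma card_supp_subset_nonzero_at:
  assumes "finite S" "i \<in> S"
  shows "card {u :: nat \<Rightarrow> 'a::{finite,field}. supp u \<subseteq> S \<and> u i \<noteq> 0}
    = (CARD('a) - 1) * CARD('a) ^ (card S - 1)"
proof -
  let ?q = "CARD('a)"
  have split: "{u :: nat \<Rightarrow> 'a. supp u \<subseteq> S}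
      = {u. supp u \<subseteq> S - {i}} \<union> {u. supp u \<subseteq> S \<and> u i \<noteq> 0}"
    using assms(2) by (auto simp: supp_def)
  have "finite {u :: nat \<Rightarrow> 'a. supp u \<subseteq> S \<and> u i \<noteq> 0}"
    by (rule finite_subset[OF _ finite_supp_subset[OF assms(1)]]) auto
  then have "card {u :: nat \<Rightarrow> 'a. supp u \<subseteq> S}
      = card {u :: nat \<Rightarrow> 'a. supp u \<subseteq> S - {i}} + card {u :: nat \<Rightarrow> 'a. supp u \<subseteq> S \<and> u i \<noteq> 0}"
    unfolding split using assms
    by (subst card_Un_disjoint) (auto simp: finite_supp_subset, auto simp: supp_def)
  then have "?q ^ card S = ?q ^ (card S - 1) + card {u :: nat \<Rightarrow> 'a. supp u \<subseteq> S \<and> u i \<noteq> 0}"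
    using assms by (simp add: card_supp_subset)
  moreover have "?q ^ card S = ?q * ?q ^ (card S - 1)"
    using assms by (metis card_gt_0_iff empty_iff power_eq_if less_not_refl2)
  ultimately show ?thesis by (simp add: algebra_simps diff_mult_distrib)
qed

lemma covering_finite: "covering n F \<Longrightarrow> finite F"
  unfolding covering_def by (metis finite_UnionD finite_atLeastAtMost)

lemma covering_block_subset: "covering n F \<Longrightarrow> A \<in> F \<Longrightarrow> A \<subseteq> {1..n}"
  unfolding covering_def by blast

lemma wtF_cong_supp: "supp x = supp y \<Longrightarrow> wtF F x = wtF F y"
  unfolding wtF_def by simp

lemma Min_eq_1_iff:
  fixes M :: "nat set"
  assumes "finite M" "M \<noteq> {}"
  shows "Min M = 1 \<longleftrightarrow> 1 \<in> M \<and> 0 \<notin> M"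
  using assms by (metis Min_in Min_le One_nat_def le_neq_implies_less less_Suc0 not_one_le_zero)

lemma wtF_eq_1_iff:
  assumes "covering n F" "x \<in> vecs n"
  shows "wtF F x = 1 \<longleftrightarrow> supp x \<noteq> {} \<and> (\<exists>A\<in>F. supp x \<subseteq> A)"
proof -
  let ?M = "{card \<A> | \<A>. \<A> \<subseteq> F \<and> supp x \<subseteq> \<Union>\<A>}"
  have fin: "finite F" using covering_finite[OF assms(1)] .
  have "?M \<subseteq> card ` Pow F" by auto
  then have "finite ?M" using fin finite_subset by blast
  moreover have "card F \<in> ?M" using assms unfolding covering_def vecs_eq by blast
  moreover have "0 \<in> ?M \<longleftrightarrow> supp x = {}"
    using fin by (auto intro!: exI[of _ "{}"] dest: finite_subset)
  moreover have "1 \<in> ?M \<longleftrightarrow> (\<exists>A\<in>F. supp x \<subseteq> A)"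
  proof
    assume "1 \<in> ?M"
    then obtain \<A> where "\<A> \<subseteq> F" "supp x \<subseteq> \<Union>\<A>" "card \<A> = 1" by auto
    then show "\<exists>A\<in>F. supp x \<subseteq> A" by (auto simp: card_1_singleton_iff)
  next
    assume "\<exists>A\<in>F. supp x \<subseteq> A"
    then obtain A where "A \<in> F" "supp x \<subseteq> A" by blast
    then show "1 \<in> ?M" by (auto intro!: exI[of _ "{A}"])
  qed
  ultimately show ?thesis unfolding wtF_def by (subst Min_eq_1_iff) auto
qed

lemma wtF_eq_1_if_supp_subset_block:
  assumes "covering n F" "A \<in> F" "supp x \<subseteq> A" "supp x \<noteq> {}"
  shows "x \<in> vecs n" "wtF F x = 1"
proof -
  show "x \<in> vecs n" using assms covering_block_subset by (fastforce simp: vecs_eq)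
  then show "wtF F x = 1" using assms wtF_eq_1_iff by blast
qed

lemma weight_enum_apply:
  "weight_enum F C (i, j) = (if i = Max (wtF F ` C) - j then card {c\<in>C. wtF F c = j} else 0)"
proof -
  have "{c\<in>C. i = Max (wtF F ` C) - wtF F c \<and> j = wtF F c}
      = (if i = Max (wtF F ` C) - j then {c\<in>C. wtF F c = j} else {})"
    by auto
  then show ?thesis unfolding weight_enum_def Let_def by simp
qed

lemma weight_enum_eq_iff_card_wt_eq:
  fixes C1 C2 :: "(nat \<Rightarrow> 'a::field) set"
  assumes "finite C1" "C1 \<noteq> {}" "finite C2" "C2 \<noteq> {}"
  shows "weight_enum F C1 = weight_enum F C2
    \<longleftrightarrow> (\<forall>k. card {c\<in>C1. wtF F c = k} = card {c\<in>C2. wtF F c = k})"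
proof -
  have wt_image: "wtF F ` C = {k. card {c\<in>C. wtF F c = k} \<noteq> 0}" if "finite C" for C
    using that by (auto simp: card_eq_0_iff)
  have max_count: "card {c\<in>C. wtF F c = Max (wtF F ` C)} \<noteq> 0" if "finite C" "C \<noteq> {}" for C
    using that Max_in[of "wtF F ` C"] wt_image[OF that(1)] by auto
  show ?thesis
  proof
    assume eq: "weight_enum F C1 = weight_enum F C2"
    have le: "Max (wtF F ` C') \<le> Max (wtF F ` C)"
      if "weight_enum F C = weight_enum F C'" "finite C" "finite C'" "C' \<noteq> {}" for C C' :: "(nat \<Rightarrow> 'a) set"
    proof -
      have "weight_enum F C (0, Max (wtF F ` C')) \<noteq> 0"
        using that max_count[of C'] by (simp add: weight_enum_apply)
      then have "card {c\<in>C. wtF F c = Max (wtF F ` C')} \<noteq> 0"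
        by (simp add: weight_enum_apply split: if_splits)
      then obtain c where "c \<in> C" "wtF F c = Max (wtF F ` C')"
        by (metis (mono_tags, lifting) card.empty empty_Collect_eq)
      then show ?thesis using \<open>finite C\<close> by (metis Max_ge finite_imageI image_eqI)
    qed
    have "Max (wtF F ` C1) = Max (wtF F ` C2)"
      using le[OF eq assms(1,3,4)] le[OF eq[symmetric] assms(3,1,2)] by simp
    then show "\<forall>k. card {c\<in>C1. wtF F c = k} = card {c\<in>C2. wtF F c = k}"
      using fun_cong[OF eq, of "(Max (wtF F ` C1) - k, k)" for k] by (simp add: weight_enum_apply)
  next
    assume "\<forall>k. card {c\<in>C1. wtF F c = k} = card {c\<in>C2. wtF F c = k}"
    moreover from this have "wtF F ` C1 = wtF F ` C2"
      using wt_image[OF assms(1)] wt_image[OF assms(3)] by simp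
    ultimately show "weight_enum F C1 = weight_enum F C2"
      by (auto simp: weight_enum_apply)
  qed
qed

definition scalar_multiples :: "(nat \<Rightarrow> 'a::field) \<Rightarrow> (nat \<Rightarrow> 'a) set" where
  "scalar_multiples v = range (\<lambda>a i. a * v i)"

lemma linear_code_scalar_multiples:
  fixes v :: "nat \<Rightarrow> 'a::field"
  shows "v \<in> vecs n \<Longrightarrow> linear_code n (scalar_multiples v)"
  unfolding linear_code_def scalar_multiples_def
proof (intro conjI ballI allI)
  show "range (\<lambda>a i. a * v i) \<subseteq> vecs n" if "v \<in> vecs n"
    using that unfolding vecs_def by auto
  show "(\<lambda>_. 0) \<in> range (\<lambda>a i. a * v i)"
    by (rule range_eqI[of _ _ 0]) simp
  fix x y assume "x \<in> range (\<lambda>a i. a * v i)" "y \<in> range (\<lambda>a i. a * v i)"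
  then obtain a b where "x = (\<lambda>i. a * v i)" "y = (\<lambda>i. b * v i)" by blast
  then show "(\<lambda>i. x i + y i) \<in> range (\<lambda>a i. a * v i)"
    by (intro range_eqI[of _ _ "a + b"]) (simp add: distrib_right)
next
  fix c x assume "x \<in> range (\<lambda>a i. a * v i)"
  then obtain a where "x = (\<lambda>i. a * v i)" by blast
  then show "(\<lambda>i. c * x i) \<in> range (\<lambda>a i. a * v i)"
    by (intro range_eqI[of _ _ "c * a"]) (simp add: mult.assoc)
qed

lemma dual_code_scalar_multiples:
  "dual_code n (scalar_multiples v) = {u \<in> vecs n. (\<Sum>i\<in>{1..n}. u i * v i) = 0}"
proof -
  have scale: "(\<Sum>i\<in>{1..n}. u i * (a * v i)) = a * (\<Sum>i\<in>{1..n}. u i * v i)" for u a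
    by (simp add: sum_distrib_left algebra_simps)
  have "(\<forall>c\<in>scalar_multiples v. (\<Sum>i\<in>{1..n}. u i * c i) = 0)
      \<longleftrightarrow> (\<Sum>i\<in>{1..n}. u i * v i) = 0" for u
  proof
    assume "\<forall>c\<in>scalar_multiples v. (\<Sum>i\<in>{1..n}. u i * c i) = 0"
    moreover have "v \<in> scalar_multiples v"
      unfolding scalar_multiples_def by (rule range_eqI[of _ _ 1]) simp
    ultimately show "(\<Sum>i\<in>{1..n}. u i * v i) = 0" by blast
  next
    assume "(\<Sum>i\<in>{1..n}. u i * v i) = 0"
    then show "\<forall>c\<in>scalar_multiples v. (\<Sum>i\<in>{1..n}. u i * c i) = 0"
      unfolding scalar_multiples_def using scale by auto
  qed
  then show ?thesis
    unfolding dual_code_def by simp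
qed

lemma card_scalar_multiples_wt:
  fixes v :: "nat \<Rightarrow> 'a::field"
  assumes "v \<noteq> (\<lambda>_. 0)"
  shows "card {c \<in> scalar_multiples v. wtF F c = k}
    = card {a :: 'a. (if a = 0 then wtF F (\<lambda>_. 0 :: 'a) else wtF F v) = k}"
proof -
  have inj: "inj (\<lambda>a i. a * v i)"
    using assms by (intro injI) (metis fun_eq_iff mult_cancel_right)
  have wt: "wtF F (\<lambda>i. a * v i) = (if a = 0 then wtF F (\<lambda>_. 0 :: 'a) else wtF F v)" for a
    by (cases "a = 0") (auto intro: wtF_cong_supp simp: supp_def)
  have "{c \<in> scalar_multiples v. wtF F c = k}
      = (\<lambda>a i. a * v i) ` {a. (if a = 0 then wtF F (\<lambda>_. 0 :: 'a) else wtF F v) = k}"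
    unfolding scalar_multiples_def wt[symmetric] by auto
  then show ?thesis
    by (simp add: card_image inj_on_subset[OF inj])
qed

lemma admits_MacWilliams_card_orthogonal_wt_eq:
  fixes v w :: "nat \<Rightarrow> 'a::{finite,field}"
  assumes mw: "admits_MacWilliams TYPE('a) n F"
    and v: "v \<in> vecs n" "v \<noteq> (\<lambda>_. 0)" and w: "w \<in> vecs n" "w \<noteq> (\<lambda>_. 0)"
    and wt: "wtF F v = wtF F w"
  shows "card {u \<in> vecs n. (\<Sum>i\<in>{1..n}. u i * v i) = 0 \<and> wtF F u = k}
    = card {u \<in> vecs n. (\<Sum>i\<in>{1..n}. u i * w i) = 0 \<and> wtF F u = k}"
proof -
  have code: "finite C \<and> C \<noteq> {}" if "linear_code n C" for C :: "(nat \<Rightarrow> 'a) set"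
    using that finite_subset[OF _ finite_vecs] unfolding linear_code_def by auto
  have dual: "finite (dual_code n C) \<and> dual_code n C \<noteq> {}" for C :: "(nat \<Rightarrow> 'a) set"
  proof -
    have "(\<lambda>_. 0) \<in> dual_code n C" unfolding dual_code_def vecs_def by simp
    moreover have "dual_code n C \<subseteq> vecs n" unfolding dual_code_def by auto
    ultimately show ?thesis using finite_subset finite_vecs by blast
  qed
  have "weight_enum F (scalar_multiples v) = weight_enum F (scalar_multiples w)"
    using code[OF linear_code_scalar_multiples[OF v(1)]] code[OF linear_code_scalar_multiples[OF w(1)]]
    by (simp add: weight_enum_eq_iff_card_wt_eq card_scalar_multiples_wt v(2) w(2) wt)
  then have "weight_enum F (dual_code n (scalar_multiples v))
      = weight_enum F (dual_code n (scalar_multiples w))"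
    using mw linear_code_scalar_multiples[OF v(1)] linear_code_scalar_multiples[OF w(1)]
    unfolding admits_MacWilliams_def by blast
  then show ?thesis
    using dual[of "scalar_multiples v"] dual[of "scalar_multiples w"]
    by (simp add: weight_enum_eq_iff_card_wt_eq dual_code_scalar_multiples conj_assoc)
qed

definition unit_vec :: "nat \<Rightarrow> nat \<Rightarrow> 'a::{zero,one}" where
  "unit_vec i = (\<lambda>k. if k = i then 1 else 0)"

lemma supp_unit_vec: "supp (unit_vec i :: nat \<Rightarrow> 'a::zero_neq_one) = {i}"
  by (auto simp: supp_def unit_vec_def)

lemma sum_mult_unit_vec:
  fixes u :: "nat \<Rightarrow> 'a::semiring_1"
  assumes "i \<in> {1..n}"
  shows "(\<Sum>k\<in>{1..n}. u k * unit_vec i k) = u i"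
  using assms by (simp add: unit_vec_def if_distrib cong: if_cong)

lemma admits_MacWilliams_card_wt1_zero_at_eq:
  fixes F :: "nat set set"
  assumes cov: "covering n F" and mw: "admits_MacWilliams TYPE('a::{finite,field}) n F"
    and "i \<in> {1..n}" "j \<in> {1..n}"
  shows "card {u \<in> vecs n. (u :: nat \<Rightarrow> 'a) i = 0 \<and> wtF F u = 1}
    = card {u \<in> vecs n. (u :: nat \<Rightarrow> 'a) j = 0 \<and> wtF F u = 1}"
proof -
  have unit: "(unit_vec k :: nat \<Rightarrow> 'a) \<in> vecs n" "wtF F (unit_vec k :: nat \<Rightarrow> 'a) = 1"
    "unit_vec k \<noteq> (\<lambda>_. 0 :: 'a)" if k: "k \<in> {1..n}" for k
  proof -
    obtain A where A: "A \<in> F" "k \<in> A" using k cov unfolding covering_def by blast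
    then show "(unit_vec k :: nat \<Rightarrow> 'a) \<in> vecs n" "wtF F (unit_vec k :: nat \<Rightarrow> 'a) = 1"
      using wtF_eq_1_if_supp_subset_block[OF cov A(1), of "unit_vec k :: nat \<Rightarrow> 'a"]
      by (auto simp: supp_unit_vec)
    show "unit_vec k \<noteq> (\<lambda>_. 0 :: 'a)" by (simp add: unit_vec_def fun_eq_iff)
  qed
  show ?thesis
    using admits_MacWilliams_card_orthogonal_wt_eq[OF mw unit(1,3)[OF assms(3)] unit(1,3)[OF assms(4)], of 1]
      unit(2)[OF assms(3)] unit(2)[OF assms(4)] sum_mult_unit_vec[OF assms(3), where 'a = 'a] sum_mult_unit_vec[OF assms(4), where 'a = 'a]
    by simp
qed

lemma wtF_fun_upd_zero_eq_1:
  fixes u :: "nat \<Rightarrow> 'a::field"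
  assumes cov: "covering n F" and u: "u \<in> vecs n" "wtF F u = 1" "u i + u a = 0" and "a \<noteq> i"
  shows "u(i := 0) \<in> vecs n" "wtF F (u(i := 0)) = 1"
proof -
  obtain B where B: "B \<in> F" "supp u \<subseteq> B" and "supp u \<noteq> {}"
    using u wtF_eq_1_iff[OF cov] by blast
  have "supp (u(i := 0)) \<noteq> {}"
  proof (cases "u i = 0")
    case False
    then have "a \<in> supp (u(i := 0))" using u(3) \<open>a \<noteq> i\<close> by (auto simp: supp_def add_eq_0_iff2)
    then show ?thesis by blast
  qed (use \<open>supp u \<noteq> {}\<close> in \<open>simp add: fun_upd_idem\<close>)
  moreover have "supp (u(i := 0)) \<subseteq> B" using B by (auto simp: supp_def)
  ultimately show "u(i := 0) \<in> vecs n" "wtF F (u(i := 0)) = 1"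
    using wtF_eq_1_if_supp_subset_block[OF cov B(1)] by blast+
qed

lemma card_wt1_sum_zero_less:
  assumes cov: "covering n F" and nored: "no_redundant F"
    and X: "X \<in> F" "a \<in> X" "i \<notin> X"
  shows "card {u \<in> vecs n. (u :: nat \<Rightarrow> 'a::{finite,field}) i + u a = 0 \<and> wtF F u = 1}
    < card {u \<in> vecs n. (u :: nat \<Rightarrow> 'a) i = 0 \<and> wtF F u = 1}"
proof -
  let ?S = "{u \<in> vecs n. (u :: nat \<Rightarrow> 'a) i + u a = 0 \<and> wtF F u = 1}"
  let ?T = "{u \<in> vecs n. (u :: nat \<Rightarrow> 'a) i = 0 \<and> wtF F u = 1}"
  define t :: "nat \<Rightarrow> 'a" where "t = (\<lambda>k. if k \<in> X then 1 else 0)"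
  have "a \<noteq> i" using X by blast
  have "supp t = X" by (auto simp: t_def supp_def)
  then have "t \<in> vecs n" "wtF F t = 1"
    using X wtF_eq_1_if_supp_subset_block[OF cov X(1)] by auto
  moreover have "t i = 0" using X(3) by (simp add: t_def)
  ultimately have "t \<in> ?T" by blast
  have "inj_on (\<lambda>u. u(i := 0)) ?S"
  proof (rule inj_onI)
    fix u v assume "u \<in> ?S" "v \<in> ?S" and eq: "u(i := 0) = v(i := 0)"
    then have "u i = - u a" "v i = - v a" "u a = v a"
      using \<open>a \<noteq> i\<close> by (auto simp: eq_neg_iff_add_eq_0 dest: fun_cong[of _ _ a])
    then show "u = v" using eq by (metis fun_upd_triv fun_upd_upd)
  qed
  moreover have "(\<lambda>u. u(i := 0)) ` ?S \<subseteq> ?T - {t}"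
  proof (rule image_subsetI)
    fix u assume "u \<in> ?S"
    then have u: "u \<in> vecs n" "u i + u a = 0" "wtF F u = 1" by auto
    then have "u(i := 0) \<in> ?T" using wtF_fun_upd_zero_eq_1[OF cov u(1,3,2) \<open>a \<noteq> i\<close>] by simp
    moreover have "u(i := 0) \<noteq> t"
    proof
      assume "u(i := 0) = t"
      then have "u k = 1" if "k \<in> X" for k
        using that X(3) by (metis fun_upd_other t_def)
      moreover from this have "u i \<noteq> 0" using u(2) X(2) by (auto simp: add_eq_0_iff2)
      moreover obtain B where "B \<in> F" "supp u \<subseteq> B"
        using u wtF_eq_1_iff[OF cov] by blast
      ultimately have "B \<in> F" "X \<subset> B" using X(3) by (auto simp: supp_def)
      then show False using nored X(1) by (auto simp: no_redundant_def redundant_def)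
    qed
    ultimately show "u(i := 0) \<in> ?T - {t}" by blast
  qed
  moreover have "finite ?T" by (rule finite_subset[OF _ finite_vecs]) auto
  ultimately have "card ?S \<le> card (?T - {t})"
    by (metis (no_types, lifting) card_image card_mono finite_Diff)
  also have "\<dots> < card ?T" using \<open>finite ?T\<close> \<open>t \<in> ?T\<close> by (rule card_Diff1_less)
  finally show ?thesis .
qed

lemma admits_MacWilliams_blocks_disjoint:
  fixes F :: "nat set set"
  assumes cov: "covering n F" and nored: "no_redundant F"
    and mw: "admits_MacWilliams TYPE('a::{finite,field}) n F"
    and A: "A \<in> F" and B: "B \<in> F" and "A \<noteq> B"
  shows "A \<inter> B = {}"
proof (rule ccontr)
  assume "A \<inter> B \<noteq> {}"
  then obtain a where a: "a \<in> A" "a \<in> B" by blast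
  have "\<not> A \<subset> B" using nored A B by (auto simp: no_redundant_def redundant_def)
  then obtain i where i: "i \<in> A" "i \<notin> B" using \<open>A \<noteq> B\<close> by blast
  define v :: "nat \<Rightarrow> 'a" where "v = unit_vec i"
  define w :: "nat \<Rightarrow> 'a" where "w = (\<lambda>k. unit_vec i k + unit_vec a k)"
  have "supp v = {i}" by (simp add: v_def supp_unit_vec)
  then have v: "v \<in> vecs n" "wtF F v = 1" "v \<noteq> (\<lambda>_. 0)"
    using wtF_eq_1_if_supp_subset_block[OF cov A, of v] i by (auto simp: supp_def)
  have "supp w = {i, a}" using i a by (auto simp: w_def unit_vec_def supp_def)
  then have w: "w \<in> vecs n" "wtF F w = 1" "w \<noteq> (\<lambda>_. 0)"
    using wtF_eq_1_if_supp_subset_block[OF cov A, of w] i a by (auto simp: supp_def)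
  have "i \<in> {1..n}" "a \<in> {1..n}" using i a covering_block_subset[OF cov A] by auto
  then have "(\<Sum>k\<in>{1..n}. u k * v k) = u i" "(\<Sum>k\<in>{1..n}. u k * w k) = u i + u a" for u
    using sum_mult_unit_vec[of i n u] sum_mult_unit_vec[of a n u]
    by (simp_all add: v_def w_def distrib_left sum.distrib)
  then have "card {u \<in> vecs n. (u :: nat \<Rightarrow> 'a) i = 0 \<and> wtF F u = 1}
      = card {u \<in> vecs n. (u :: nat \<Rightarrow> 'a) i + u a = 0 \<and> wtF F u = 1}"
    using admits_MacWilliams_card_orthogonal_wt_eq[OF mw v(1,3) w(1,3), of 1] v(2) w(2) by simp
  with card_wt1_sum_zero_less[OF cov nored B a(2) i(2), where 'a = 'a] show False by simp
qed

lemma wt1_nonzero_at_eq: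
  assumes cov: "covering n F" and disj: "pairwise disjnt F" and A: "A \<in> F" "i \<in> A"
  shows "{u \<in> vecs n. u i \<noteq> 0 \<and> wtF F u = 1} = {u :: nat \<Rightarrow> 'a::field. supp u \<subseteq> A \<and> u i \<noteq> 0}"
proof safe
  fix u :: "nat \<Rightarrow> 'a" and k
  assume u: "u \<in> vecs n" "u i \<noteq> 0" "wtF F u = 1" and "k \<in> supp u"
  then obtain B where "B \<in> F" "supp u \<subseteq> B" using wtF_eq_1_iff[OF cov] by blast
  moreover have "i \<in> supp u" using u(2) by (simp add: supp_def)
  ultimately have "B = A" using disj A by (auto simp: pairwise_def disjnt_def)
  then show "k \<in> A" using \<open>supp u \<subseteq> B\<close> \<open>k \<in> supp u\<close> by blast
next
  fix u :: "nat \<Rightarrow> 'a" assume "supp u \<subseteq> A" "u i \<noteq> 0"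
  moreover from this have "supp u \<noteq> {}" by (auto simp: supp_def)
  ultimately show "u \<in> vecs n" "wtF F u = 1"
    using wtF_eq_1_if_supp_subset_block[OF cov A(1)] by blast+
qed

lemma admits_MacWilliams_blocks_card_eq:
  fixes F :: "nat set set"
  assumes cov: "covering n F" and disj: "pairwise disjnt F"
    and mw: "admits_MacWilliams TYPE('a::{finite,field}) n F"
    and A: "A \<in> F" "A \<noteq> {}" and B: "B \<in> F" "B \<noteq> {}"
  shows "card A = card B"
proof -
  let ?q = "CARD('a)"
  obtain i j where i: "i \<in> A" and j: "j \<in> B" using A B by blast
  have "A \<subseteq> {1..n}" "B \<subseteq> {1..n}"
    using covering_block_subset[OF cov] A(1) B(1) by blast+
  then have fin: "finite A" "finite B" and ij: "i \<in> {1..n}" "j \<in> {1..n}"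
    using finite_subset i j by auto
  have split: "card {u \<in> vecs n. (u :: nat \<Rightarrow> 'a) k = 0 \<and> wtF F u = 1}
      + card {u \<in> vecs n. (u :: nat \<Rightarrow> 'a) k \<noteq> 0 \<and> wtF F u = 1}
      = card {u \<in> vecs n. wtF F (u :: nat \<Rightarrow> 'a) = 1}" for k
  proof -
    have "{u \<in> vecs n. wtF F (u :: nat \<Rightarrow> 'a) = 1}
        = {u \<in> vecs n. u k = 0 \<and> wtF F u = 1} \<union> {u \<in> vecs n. u k \<noteq> 0 \<and> wtF F u = 1}"
      by blast
    then show ?thesis
      by (simp add: card_Un_disjoint[symmetric] finite_vecs disjoint_iff)
  qed
  have "card {u \<in> vecs n. (u :: nat \<Rightarrow> 'a) i \<noteq> 0 \<and> wtF F u = 1}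
      = card {u \<in> vecs n. (u :: nat \<Rightarrow> 'a) j \<noteq> 0 \<and> wtF F u = 1}"
    using split[of i] split[of j] admits_MacWilliams_card_wt1_zero_at_eq[OF cov mw ij] by simp
  then have "card {u :: nat \<Rightarrow> 'a. supp u \<subseteq> A \<and> u i \<noteq> 0}
      = card {u :: nat \<Rightarrow> 'a. supp u \<subseteq> B \<and> u j \<noteq> 0}"
    unfolding wt1_nonzero_at_eq[OF cov disj A(1) i] wt1_nonzero_at_eq[OF cov disj B(1) j] .
  then have "(?q - 1) * ?q ^ (card A - 1) = (?q - 1) * ?q ^ (card B - 1)"
    by (simp add: card_supp_subset_nonzero_at fin i j)
  then have "card A - 1 = card B - 1"
    using card_field_ge_2[where 'a = 'a] by (simp add: power_inject_exp)
  moreover have "card A \<noteq> 0" "card B \<noteq> 0" using fin A B by auto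
  ultimately show ?thesis by simp
qed

theorem proposition4:
  fixes n :: nat and F :: "nat set set"
  assumes "n \<ge> 1"
    and "covering n F"
    and "no_redundant F"
    and "admits_MacWilliams TYPE('a::{finite,field}) n F"
  shows "\<exists>k. k_partition k n F"
proof -
  note cov = assms(2) and nored = assms(3) and mw = assms(4)
  have "1 \<in> \<Union>F" using assms(1,2) unfolding covering_def by simp
  then obtain B where B: "B \<in> F" "1 \<in> B" by blast
  have nonempty: "A \<noteq> {}" if "A \<in> F" for A
    using that B nored by (auto simp: no_redundant_def redundant_def)
  have disj: "pairwise disjnt F"
    using admits_MacWilliams_blocks_disjoint[OF cov nored mw] by (auto simp: pairwise_def disjnt_def)
  have "card A = card B" if "A \<in> F" for A
    using admits_MacWilliams_blocks_card_eq[OF cov disj mw that nonempty[OF that] B(1) nonempty[OF B(1)]] .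
  then have "k_partition (card B) n F"
    using cov nonempty disj by (auto simp: k_partition_def covering_def pairwise_def disjnt_def)
  then show ?thesis ..
qed

end
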